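(* Let $C$ be a projective linear code of length $n$ over $\mathbb{Z}_4$ with exactly two nonzero Lee weights $w_1<w_2$. Then the following are equivalent: (1) $C$ is Plotkin-optimal; (2) $w_1=n$; (3) $w_2=|C|/2$.
   Context: A linear code of length $n$ over $\mathbb{Z}_4$ is a $\mathbb{Z}_4$-submodule of $\mathbb{Z}_4^n$. Lee weight: $w_L(0)=0,w_L(1)=1,w_L(2)=2,w_L(3)=1$, additive on vectors; $d_L(C)$ is the minimum nonzero Lee weight. $C$ is Plotkin-optimal if $d_L(C)=\lfloor\frac{|C|}{|C|-1}n\rfloor$. $C$ is projective if its dual with respect to $\sum x_iy_i\in\mathbb{Z}_4$ has minimum Lee distance at least $3$. *)

theory Defs
  imports Complex_Main "HOL-Library.Numeral_Type"
begin

type_synonym z4vec = "4 list"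

definition z4vecs :: "nat \<Rightarrow> z4vec set" where
  "z4vecs n = {x. length x = n}"

definition vadd :: "z4vec \<Rightarrow> z4vec \<Rightarrow> z4vec" where
  "vadd x y = map2 (+) x y"

definition smul :: "4 \<Rightarrow> z4vec \<Rightarrow> z4vec" where
  "smul a x = map (\<lambda>t. a * t) x"

definition z4_linear_code :: "nat \<Rightarrow> z4vec set \<Rightarrow> bool" where
  "z4_linear_code n C \<longleftrightarrow> C \<subseteq> z4vecs n \<and> replicate n 0 \<in> C
     \<and> (\<forall>x\<in>C. \<forall>y\<in>C. vadd x y \<in> C) \<and> (\<forall>a. \<forall>x\<in>C. smul a x \<in> C)"

definition lee :: "4 \<Rightarrow> nat" where
  "lee t = (if t = 0 then 0 else if t = 2 then 2 else 1)"

definition lee_wt :: "z4vec \<Rightarrow> nat" where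
  "lee_wt x = sum_list (map lee x)"

definition inner4 :: "z4vec \<Rightarrow> z4vec \<Rightarrow> 4" where
  "inner4 x y = sum_list (map2 (*) x y)"

definition dual_code :: "nat \<Rightarrow> z4vec set \<Rightarrow> z4vec set" where
  "dual_code n C = {y \<in> z4vecs n. \<forall>x\<in>C. inner4 x y = 0}"

definition min_lee :: "nat \<Rightarrow> z4vec set \<Rightarrow> nat" where
  "min_lee n C = Min (lee_wt ` (C - {replicate n 0}))"

definition z4_projective :: "nat \<Rightarrow> z4vec set \<Rightarrow> bool" where
  "z4_projective n C \<longleftrightarrow> (\<forall>y \<in> dual_code n C. y \<noteq> replicate n 0 \<longrightarrow> lee_wt y \<ge> 3)"

definition plotkin_optimal :: "nat \<Rightarrow> z4vec set \<Rightarrow> bool" where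
  "plotkin_optimal n C \<longleftrightarrow>
     int (min_lee n C) = \<lfloor>real (card C) / (real (card C) - 1) * real n\<rfloor>"

end

theory Submission
  imports Defs
begin

(* Let chi(a) = i^a (z4_char below) be the basic character of Z_4.  For a linear code C the
   sum of chi <c, y> over c in C vanishes unless y lies in the dual code, so for a projective
   code it vanishes for every nonzero y of Lee weight at most 2.  The Lee weight of a
   coordinate, its square, and the product of the Lee weights of two coordinates are affine
   combinations of 1 and of Re chi applied to linear forms of exactly this kind; summing over
   the code gives the first two moments of the Lee weight w:
     sum_c w(c) = n |C|   and   sum_c w(c)^2 = |C| (n^2 + n/2).
   When the nonzero weights are w1 and w2, only c = 0 contributes to
   sum_c (w(c) - w1) (w(c) - w2), whence |C| ((n - w1) (n - w2) + n/2) = w1 w2. *)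

lemma z4_cases:
  fixes x :: 4
  obtains "x = 0" | "x = 1" | "x = 2" | "x = 3"
proof (cases x)
  case (of_int z)
  then have "z = 0 \<or> z = 1 \<or> z = 2 \<or> z = 3"
    by auto
  then show ?thesis
    using of_int that by auto
qed

lemma lee_0 [simp]: "lee 0 = 0"
  by (simp add: lee_def)

lemma lee_add_le: "lee (a + b) \<le> lee a + lee b"
  by (cases a rule: z4_cases; cases b rule: z4_cases) (simp_all add: lee_def)

lemma lee_wt_replicate_0 [simp]: "lee_wt (replicate n 0) = 0"
  by (simp add: lee_wt_def sum_list_replicate)

lemma lee_wt_sum: "lee_wt x = (\<Sum>i<length x. lee (x ! i))"
  unfolding lee_wt_def by (simp add: sum_list_sum_nth atLeast0LessThan)

lemma lee_wt_map_upt: "lee_wt (map f [0..<n]) = (\<Sum>k<n. lee (f k))"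
  by (simp add: lee_wt_sum)

lemma inner4_sum: "length y = length x \<Longrightarrow> inner4 x y = (\<Sum>i<length x. x ! i * y ! i)"
  unfolding inner4_def by (simp add: sum_list_sum_nth atLeast0LessThan)

lemma inner4_map_upt: "length c = n \<Longrightarrow> inner4 c (map f [0..<n]) = (\<Sum>k<n. c ! k * f k)"
  by (simp add: inner4_sum)

lemma inner4_vadd_left:
  "length x = length y \<Longrightarrow> length z = length y \<Longrightarrow>
    inner4 (vadd x y) z = inner4 x z + inner4 y z"
  by (simp add: inner4_sum vadd_def distrib_right sum.distrib)

lemma nth_vadd: "i < length x \<Longrightarrow> i < length y \<Longrightarrow> vadd x y ! i = x ! i + y ! i"
  by (simp add: vadd_def)

lemma vadd_left_cancel:
  "length x = length c \<Longrightarrow> length y = length c \<Longrightarrow> vadd c x = vadd c y \<Longrightarrow> x = y"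
proof (rule nth_equalityI)
  assume lens: "length x = length c" "length y = length c" and eq: "vadd c x = vadd c y"
  then show "length x = length y" by simp
  fix i assume "i < length x"
  then have "c ! i + x ! i = c ! i + y ! i"
    using arg_cong[OF eq, of "\<lambda>v. v ! i"] lens by (simp add: nth_vadd)
  then show "x ! i = y ! i" by simp
qed

lemma finite_z4vecs: "finite (z4vecs n)"
proof -
  have "z4vecs n = {xs. set xs \<subseteq> UNIV \<and> length xs = n}"
    by (auto simp: z4vecs_def)
  then show ?thesis
    using finite_lists_length_eq[of "UNIV :: 4 set" n] by simp
qed

lemma z4_linear_code_finite: "z4_linear_code n C \<Longrightarrow> finite C"
  unfolding z4_linear_code_def using finite_z4vecs finite_subset by blast

lemma z4_linear_code_length: "z4_linear_code n C \<Longrightarrow> c \<in> C \<Longrightarrow> length c = n"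
  unfolding z4_linear_code_def z4vecs_def by auto

lemma z4_linear_code_vadd: "z4_linear_code n C \<Longrightarrow> x \<in> C \<Longrightarrow> y \<in> C \<Longrightarrow> vadd x y \<in> C"
  by (simp add: z4_linear_code_def)

lemma z4_linear_code_translate:
  assumes lin: "z4_linear_code n C" and x: "x \<in> C"
  shows "bij_betw (vadd x) C C"
proof -
  have inj: "inj_on (vadd x) C"
  proof (rule inj_onI)
    fix a b assume "a \<in> C" "b \<in> C" "vadd x a = vadd x b"
    then show "a = b"
      using lin x by (intro vadd_left_cancel[of a x b]) (simp_all add: z4_linear_code_length)
  qed
  moreover have "vadd x ` C = C"
  proof (rule endo_inj_surj[OF _ _ inj])
    show "finite C" using lin by (rule z4_linear_code_finite)
    show "vadd x ` C \<subseteq> C" using lin x by (auto intro: z4_linear_code_vadd)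
  qed
  ultimately show ?thesis by (simp add: bij_betw_def)
qed

definition z4_char :: "4 \<Rightarrow> complex" where
  "z4_char a = (if a = 0 then 1 else if a = 1 then \<i> else if a = 2 then -1 else -\<i>)"

lemma z4_char_add: "z4_char (a + b) = z4_char a * z4_char b"
  by (cases a rule: z4_cases; cases b rule: z4_cases) (simp_all add: z4_char_def)

lemma z4_char_eq_1_iff: "z4_char a = 1 \<longleftrightarrow> a = 0"
  by (cases a rule: z4_cases) (simp_all add: z4_char_def complex_eq_iff)

lemma lee_eq_Re_z4_char: "real (lee a) = 1 - Re (z4_char a)"
  by (cases a rule: z4_cases) (simp_all add: z4_char_def lee_def)

lemma lee_square_eq_Re_z4_char:
  "real (lee a) ^ 2 = 3 / 2 - 2 * Re (z4_char a) + Re (z4_char (2 * a)) / 2"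
  by (cases a rule: z4_cases) (simp_all add: z4_char_def lee_def)

(* From Re chi(a) * Re chi(b) = (Re chi(a + b) + Re chi(a - b)) / 2, with a - b = a + 3 b. *)
lemma lee_times_lee_eq_Re_z4_char:
  "real (lee a) * real (lee b) = 1 - Re (z4_char a) - Re (z4_char b)
     + Re (z4_char (a + b)) / 2 + Re (z4_char (a + 3 * b)) / 2"
  by (cases a rule: z4_cases; cases b rule: z4_cases) (simp_all add: z4_char_def lee_def)

(* Translating by x permutes C and multiplies the sum by chi <x, y>, which is not 1. *)
lemma character_sum_code_eq_0:
  assumes lin: "z4_linear_code n C" and x: "x \<in> C"
    and y: "length y = n" and xy: "inner4 x y \<noteq> 0"
  shows "(\<Sum>c\<in>C. z4_char (inner4 c y)) = 0"
proof -
  let ?S = "\<Sum>c\<in>C. z4_char (inner4 c y)"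
  have "?S = (\<Sum>c\<in>C. z4_char (inner4 (vadd x c) y))"
    by (rule sum.reindex_bij_betw[OF z4_linear_code_translate[OF lin x], symmetric])
  also have "\<dots> = (\<Sum>c\<in>C. z4_char (inner4 x y) * z4_char (inner4 c y))"
  proof (rule sum.cong[OF refl])
    fix c assume "c \<in> C"
    then have "inner4 (vadd x c) y = inner4 x y + inner4 c y"
      using lin x y by (simp add: inner4_vadd_left z4_linear_code_length)
    then show "z4_char (inner4 (vadd x c) y) = z4_char (inner4 x y) * z4_char (inner4 c y)"
      by (simp add: z4_char_add)
  qed
  also have "\<dots> = z4_char (inner4 x y) * ?S"
    by (simp add: sum_distrib_left)
  finally have "(1 - z4_char (inner4 x y)) * ?S = 0"
    by (simp add: algebra_simps)
  then show ?thesis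
    using xy by (simp add: z4_char_eq_1_iff)
qed

lemma projective_character_sum_eq_0:
  assumes lin: "z4_linear_code n C" and proj: "z4_projective n C"
    and y: "length y = n" "y \<noteq> replicate n 0" "lee_wt y < 3"
  shows "(\<Sum>c\<in>C. z4_char (inner4 c y)) = 0"
proof -
  have "y \<notin> dual_code n C"
    using proj y unfolding z4_projective_def by force
  then obtain x where "x \<in> C" "inner4 x y \<noteq> 0"
    using y(1) unfolding dual_code_def z4vecs_def by auto
  then show ?thesis
    using character_sum_code_eq_0[OF lin _ y(1)] by blast
qed

lemma projective_linear_form_character_sum_eq_0:
  assumes lin: "z4_linear_code n C" and proj: "z4_projective n C"
    and f: "k < n" "f k \<noteq> 0" "(\<Sum>k<n. lee (f k)) < 3"
  shows "(\<Sum>c\<in>C. z4_char (\<Sum>k<n. c ! k * f k)) = 0"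
proof -
  have "map f [0..<n] ! k \<noteq> replicate n 0 ! k"
    using f by simp
  then have "map f [0..<n] \<noteq> replicate n 0"
    by metis
  then have "(\<Sum>c\<in>C. z4_char (inner4 c (map f [0..<n]))) = 0"
    using projective_character_sum_eq_0[OF lin proj] f by (simp add: lee_wt_map_upt)
  then show ?thesis
    using lin by (simp add: inner4_map_upt z4_linear_code_length)
qed

lemma coordinate_character_Re_sum_eq_0:
  assumes lin: "z4_linear_code n C" and proj: "z4_projective n C"
    and i: "i < n" and a: "a \<noteq> 0"
  shows "(\<Sum>c\<in>C. Re (z4_char (a * c ! i))) = 0"
proof -
  have "(\<Sum>k<n. lee (if k = i then a else 0)) = lee a"
    using i by (simp add: if_distrib[of lee] cong: if_cong)
  also have "\<dots> < 3" by (simp add: lee_def)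
  finally have "(\<Sum>c\<in>C. z4_char (a * c ! i)) = 0"
    using projective_linear_form_character_sum_eq_0[OF lin proj i, of "\<lambda>k. if k = i then a else 0"]
      a i
    by (simp add: if_distrib[where f = "(*) x" for x] mult.commute cong: if_cong)
  then show ?thesis
    by (simp flip: Re_sum)
qed

lemma two_coordinate_character_Re_sum_eq_0:
  assumes lin: "z4_linear_code n C" and proj: "z4_projective n C"
    and ij: "i < n" "j < n" "i \<noteq> j" and a: "a \<noteq> 0" and ab: "lee a + lee b < 3"
  shows "(\<Sum>c\<in>C. Re (z4_char (a * c ! i + b * c ! j))) = 0"
proof -
  define f where "f k = (if k = i then a else 0) + (if k = j then b else 0)" for k
  have "(\<Sum>k<n. lee (f k))
      \<le> (\<Sum>k<n. lee (if k = i then a else 0) + lee (if k = j then b else 0))"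
    unfolding f_def by (intro sum_mono lee_add_le)
  also have "\<dots> = lee a + lee b"
    using ij by (simp add: sum.distrib if_distrib[of lee] cong: if_cong)
  finally have "(\<Sum>k<n. lee (f k)) < 3"
    using ab by linarith
  moreover have "f i \<noteq> 0"
    using ij a by (simp add: f_def)
  moreover have "(\<Sum>k<n. c ! k * f k) = a * c ! i + b * c ! j" for c
    using ij
    by (simp add: f_def distrib_left sum.distrib if_distrib[where f = "(*) x" for x] mult.commute
        cong: if_cong)
  ultimately have "(\<Sum>c\<in>C. z4_char (a * c ! i + b * c ! j)) = 0"
    using projective_linear_form_character_sum_eq_0[OF lin proj ij(1), of f] by simp
  then show ?thesis
    by (simp flip: Re_sum)
qed

lemma coordinate_lee_sum:
  assumes lin: "z4_linear_code n C" and proj: "z4_projective n C" and i: "i < n"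
  shows "(\<Sum>c\<in>C. real (lee (c ! i))) = card C"
proof -
  have "(\<Sum>c\<in>C. real (lee (c ! i))) = card C - (\<Sum>c\<in>C. Re (z4_char (1 * c ! i)))"
    by (simp add: lee_eq_Re_z4_char sum_subtractf)
  then show ?thesis
    using coordinate_character_Re_sum_eq_0[OF lin proj i, of 1] by simp
qed

lemma coordinate_lee_square_sum:
  assumes lin: "z4_linear_code n C" and proj: "z4_projective n C" and i: "i < n"
  shows "(\<Sum>c\<in>C. real (lee (c ! i)) ^ 2) = 3 / 2 * card C"
proof -
  have "(\<Sum>c\<in>C. real (lee (c ! i)) ^ 2) = 3 / 2 * card C
      - 2 * (\<Sum>c\<in>C. Re (z4_char (1 * c ! i))) + (\<Sum>c\<in>C. Re (z4_char (2 * c ! i))) / 2"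
    by (simp add: lee_square_eq_Re_z4_char sum.distrib sum_subtractf sum_distrib_left
        sum_divide_distrib)
  then show ?thesis
    using coordinate_character_Re_sum_eq_0[OF lin proj i, of 1]
      coordinate_character_Re_sum_eq_0[OF lin proj i, of 2] by simp
qed

lemma two_coordinate_lee_product_sum:
  assumes lin: "z4_linear_code n C" and proj: "z4_projective n C"
    and ij: "i < n" "j < n" "i \<noteq> j"
  shows "(\<Sum>c\<in>C. real (lee (c ! i)) * real (lee (c ! j))) = card C"
proof -
  have "(\<Sum>c\<in>C. real (lee (c ! i)) * real (lee (c ! j))) = card C
      - (\<Sum>c\<in>C. Re (z4_char (1 * c ! i))) - (\<Sum>c\<in>C. Re (z4_char (1 * c ! j)))
      + (\<Sum>c\<in>C. Re (z4_char (1 * c ! i + 1 * c ! j))) / 2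
      + (\<Sum>c\<in>C. Re (z4_char (1 * c ! i + 3 * c ! j))) / 2"
    by (simp add: lee_times_lee_eq_Re_z4_char sum.distrib sum_subtractf sum_divide_distrib)
  moreover have "lee 1 + lee 1 < 3" "lee 1 + lee 3 < 3"
    by (simp_all add: lee_def)
  ultimately show ?thesis
    using coordinate_character_Re_sum_eq_0[OF lin proj ij(1), of 1]
      coordinate_character_Re_sum_eq_0[OF lin proj ij(2), of 1]
      two_coordinate_character_Re_sum_eq_0[OF lin proj ij, of 1 1]
      two_coordinate_character_Re_sum_eq_0[OF lin proj ij, of 1 3]
    by simp
qed

lemma lee_wt_first_moment:
  assumes lin: "z4_linear_code n C" and proj: "z4_projective n C"
  shows "(\<Sum>c\<in>C. real (lee_wt c)) = n * card C"
proof -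
  have "(\<Sum>c\<in>C. real (lee_wt c)) = (\<Sum>c\<in>C. \<Sum>i<n. real (lee (c ! i)))"
    using lin by (intro sum.cong) (simp_all add: lee_wt_sum z4_linear_code_length)
  also have "\<dots> = (\<Sum>i<n. \<Sum>c\<in>C. real (lee (c ! i)))"
    by (rule sum.swap)
  also have "\<dots> = n * card C"
    using coordinate_lee_sum[OF lin proj] by simp
  finally show ?thesis .
qed

lemma lee_wt_second_moment:
  assumes lin: "z4_linear_code n C" and proj: "z4_projective n C"
  shows "(\<Sum>c\<in>C. real (lee_wt c) ^ 2) = card C * (real n ^ 2 + n / 2)"
proof -
  have "(\<Sum>c\<in>C. real (lee_wt c) ^ 2)
      = (\<Sum>c\<in>C. \<Sum>i<n. \<Sum>j<n. real (lee (c ! i)) * real (lee (c ! j)))"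
    using lin
    by (intro sum.cong)
      (simp_all add: lee_wt_sum z4_linear_code_length power2_eq_square sum_product)
  also have "\<dots> = (\<Sum>i<n. \<Sum>j<n. \<Sum>c\<in>C. real (lee (c ! i)) * real (lee (c ! j)))"
    by (simp add: sum.swap[of _ C])
  also have "\<dots> = (\<Sum>i<n. \<Sum>j<n. card C + (if j = i then card C / 2 else 0))"
  proof (intro sum.cong refl)
    fix i j assume "i \<in> {..<n}" "j \<in> {..<n}"
    then show "(\<Sum>c\<in>C. real (lee (c ! i)) * real (lee (c ! j)))
        = card C + (if j = i then card C / 2 else 0)"
      using coordinate_lee_square_sum[OF lin proj, of i]
        two_coordinate_lee_product_sum[OF lin proj, of i j]
      by (auto simp: power2_eq_square)
  qed
  also have "\<dots> = card C * (real n ^ 2 + n / 2)"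
    by (simp add: sum.distrib algebra_simps power2_eq_square)
  finally show ?thesis .
qed

lemma two_weight_moment_identity:
  assumes lin: "z4_linear_code n C" and proj: "z4_projective n C"
    and wt: "lee_wt ` (C - {replicate n 0}) \<subseteq> {w1, w2}"
  shows "card C * ((real n - w1) * (real n - w2) + n / 2) = w1 * w2"
proof -
  define p where "p c = (real (lee_wt c) - w1) * (real (lee_wt c) - w2)" for c
  have fin: "finite C"
    using lin by (rule z4_linear_code_finite)
  have zero: "replicate n 0 \<in> C"
    using lin by (simp add: z4_linear_code_def)
  have "(\<Sum>c\<in>C. p c) = p (replicate n 0) + (\<Sum>c\<in>C - {replicate n 0}. p c)"
    by (rule sum.remove[OF fin zero])
  also have "(\<Sum>c\<in>C - {replicate n 0}. p c) = 0"
    using wt by (intro sum.neutral) (auto simp: p_def)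
  finally have "(\<Sum>c\<in>C. p c) = w1 * w2"
    by (simp add: p_def)
  moreover have "(\<Sum>c\<in>C. p c) = (\<Sum>c\<in>C. real (lee_wt c) ^ 2)
      - (w1 + w2) * (\<Sum>c\<in>C. real (lee_wt c)) + w1 * w2 * card C"
    by (simp add: p_def algebra_simps power2_eq_square sum.distrib sum_subtractf sum_distrib_left)
  ultimately show ?thesis
    unfolding lee_wt_first_moment[OF lin proj] lee_wt_second_moment[OF lin proj]
    by (simp add: algebra_simps power2_eq_square)
qed

lemma two_weight_min_eq_length_iff:
  fixes n M w1 w2 :: nat
  assumes id: "M * ((real n - w1) * (real n - w2) + n / 2) = w1 * w2"
    and n: "0 < n" and w: "w1 < w2"
  shows "w1 = n \<longleftrightarrow> 2 * w2 = M"
proof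
  assume "w1 = n"
  then have "real n * (real M - real (2 * w2)) = 0"
    using id by (simp add: algebra_simps)
  then have "real M = real (2 * w2)"
    using n by simp
  then show "2 * w2 = M"
    by (simp only: of_nat_eq_iff)
next
  assume "2 * w2 = M"
  then have "real M = 2 * real w2"
    by simp
  then have "2 * real w2 * ((real n - w1) * (2 * real n - 2 * w2 + 1))
      = 2 * (M * ((real n - w1) * (real n - w2) + n / 2)) - 2 * (w1 * w2)"
    by (simp add: algebra_simps)
  then have "2 * real w2 * ((real n - w1) * (2 * real n - 2 * w2 + 1)) = 0"
    using id by simp
  moreover have "2 * real n - 2 * w2 + 1 \<noteq> 0"
  proof
    assume "2 * real n - 2 * w2 + 1 = 0"
    then have "real (2 * n + 1) = real (2 * w2)"
      by simp
    then have "2 * n + 1 = 2 * w2"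
      by (simp only: of_nat_eq_iff)
    then show False
      by presburger
  qed
  ultimately show "w1 = n"
    using w by simp
qed

(* That is, w1 would exceed the mean nonzero weight n M / (M - 1). *)
lemma two_weight_min_above_length:
  fixes n M w1 w2 :: nat
  assumes id: "M * ((real n - w1) * (real n - w2) + n / 2) = w1 * w2"
    and n: "0 < n" and w: "w1 < w2" and nw1: "n < w1"
  shows "real n < (real M - 1) * (real w1 - n)"
proof (rule ccontr)
  define x y where "x = real w1 - n" and "y = real w2 - n"
  assume "\<not> real n < (real M - 1) * (real w1 - n)"
  then have A: "(real M - 1) * x \<le> n"
    by (simp add: x_def)
  have x: "1 \<le> x" and y: "0 < y"
    using nw1 w by (simp_all add: x_def y_def)
  have "(real M - 1) * x * y \<le> n * y"
    using mult_right_mono[OF A] y by simp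
  moreover have "(real M - 1) * x * y + M * n / 2 = n * n + n * x + n * y"
    using id by (simp add: x_def y_def algebra_simps)
  ultimately have "real n * (2 * n + 2 * x) \<le> real n * M"
    by (simp add: algebra_simps)
  then have "2 * n + 2 * x \<le> M"
    using n by simp
  then have "(2 * n + 2 * x - 1) * x \<le> (real M - 1) * x"
    using x by (intro mult_right_mono) simp_all
  moreover have "2 * n + 2 * x - 1 \<le> (2 * n + 2 * x - 1) * x"
    using mult_left_mono[OF x, of "2 * n + 2 * x - 1"] x by simp
  ultimately show False
    using A x n by linarith
qed

lemma two_weight_plotkin_iff:
  fixes n M w1 w2 :: nat
  assumes id: "M * ((real n - w1) * (real n - w2) + n / 2) = w1 * w2"
    and n: "0 < n" and w: "w1 < w2" and M: "2 \<le> M"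
  shows "int w1 = \<lfloor>real M / (real M - 1) * real n\<rfloor> \<longleftrightarrow> w1 = n"
proof -
  define q where "q = real M / (real M - 1) * real n"
  have M1: "real M - 1 > 0"
    using M by simp
  have q: "q = n + n / (real M - 1)"
    using M1 by (simp add: q_def field_simps)
  show ?thesis
    unfolding q_def[symmetric]
  proof
    assume w1: "w1 = n"
    then have "M = 2 * w2"
      using two_weight_min_eq_length_iff[OF id n w] by simp
    then have "real n / (real M - 1) < 1"
      using w w1 M1 by (simp add: divide_less_eq)
    then have "\<lfloor>q\<rfloor> = int n"
      unfolding q using M1 by (simp add: floor_eq_iff)
    then show "int w1 = \<lfloor>q\<rfloor>"
      using w1 by simp
  next
    assume floor: "int w1 = \<lfloor>q\<rfloor>"
    have "int n \<le> \<lfloor>q\<rfloor>"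
      using q M1 by (simp add: le_floor_iff)
    then have "n \<le> w1"
      using floor by simp
    have "real w1 \<le> q"
      using of_int_floor_le[of q] unfolding floor[symmetric] by simp
    then have "real w1 - n \<le> n / (real M - 1)"
      by (simp add: q)
    then have "(real M - 1) * (real w1 - n) \<le> n"
      using M1 by (simp add: pos_le_divide_eq mult.commute)
    then show "w1 = n"
      using two_weight_min_above_length[OF id n w] \<open>n \<le> w1\<close> by fastforce
  qed
qed

theorem corollary4p4:
  fixes n :: nat and C :: "z4vec set" and w1 w2 :: nat
  assumes "z4_linear_code n C"
    and "z4_projective n C"
    and "lee_wt ` (C - {replicate n 0}) = {w1, w2}"
    and "w1 < w2"
  shows "(plotkin_optimal n C \<longleftrightarrow> w1 = n) \<and> (w1 = n \<longleftrightarrow> 2 * w2 = card C)"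
proof -
  note lin = assms(1) and proj = assms(2) and wt = assms(3) and w = assms(4)
  obtain c where c: "c \<in> C" "c \<noteq> replicate n 0"
    using wt by blast
  have n: "0 < n"
    using c z4_linear_code_length[OF lin c(1)] by (cases n) auto
  have "card {replicate n 0, c} \<le> card C"
    using lin c by (intro card_mono) (auto simp: z4_linear_code_finite z4_linear_code_def)
  then have M: "2 \<le> card C"
    using c(2) by simp
  have id: "card C * ((real n - w1) * (real n - w2) + n / 2) = w1 * w2"
    using two_weight_moment_identity[OF lin proj] wt by simp
  have "min_lee n C = w1"
    unfolding min_lee_def using wt w by simp
  then show ?thesis
    unfolding plotkin_optimal_def
    using two_weight_plotkin_iff[OF id n w M] two_weight_min_eq_length_iff[OF id n w] by simp
qed

end
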